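(* Let $p\ge3$ be a prime. (1) $\displaystyle \mathrm{ord}_p(\overline{F}_{p^2-1})=\sum_{k=1}^{p-1}\mu(k)\,\mathrm{ord}_p\big(\overline{G}_{\lfloor (p^2-1)/k\rfloor}\big).$ (2) For $1\le k\le p-1$ write $\lfloor (p^2-1)/k\rfloor=a_kp+b_k$ with $0\le a_k,b_k\le p-1$. Then $\mathrm{ord}_p\big(\overline{G}_{\lfloor (p^2-1)/k\rfloor}\big)=a_k(p-1-b_k)$, where $a_k=\lfloor (p-1)/k\rfloor$ and $b_k=\lfloor (p^2-1)/k\rfloor-p\lfloor (p-1)/k\rfloor$. (3) $\displaystyle \mathrm{ord}_p(\overline{F}_{p^2-1})=(p-1)-\sum_{k=1}^{p-1}\mu(k)\Big\lfloor\frac{p-1}{k}\Big\rfloor b_k.$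
   Context: For a positive integer $m$, $\overline{F}_m=\Big(\prod_{1\le h\le k\le m,\ \gcd(h,k)=1}\frac{h}{k}\Big)^{-1}$ (reciprocal of the product of all nonzero Farey fractions of order $m$) and $\overline{G}_m=\Big(\prod_{1\le h\le k\le m}\frac{h}{k}\Big)^{-1}$ (reciprocal of the product of all reduced and unreduced fractions $h/k$ with $1\le h\le k\le m$). For a nonzero rational $x$, $\mathrm{ord}_p(x)$ is the exponent of $p$ in $x$. $\mu$ is the M\"obius function. *)

theory Defs
  imports "HOL-Computational_Algebra.Computational_Algebra"
begin

definition moebius :: "nat \<Rightarrow> int" where
  "moebius n = (if n = 0 then 0
     else if squarefree n then (-1) ^ card (prime_factors n) else 0)"

definition ordp :: "nat \<Rightarrow> rat \<Rightarrow> int" where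
  "ordp p x = (case quotient_of x of (a, b) \<Rightarrow>
       int (multiplicity (int p) a) - int (multiplicity (int p) b))"

text \<open>Reciprocal of the product of the nonzero Farey fractions of order m.\<close>
definition Fbar :: "nat \<Rightarrow> rat" where
  "Fbar m = inverse (\<Prod>(h, k) \<in> {(h, k). 1 \<le> h \<and> h \<le> k \<and> k \<le> m \<and> coprime h k}.
                       of_nat h / of_nat k)"

definition Gbar :: "nat \<Rightarrow> rat" where
  "Gbar m = inverse (\<Prod>(h, k) \<in> {(h, k). 1 \<le> h \<and> h \<le> k \<and> k \<le> m}.
                       of_nat h / of_nat k)"

end

theory Submission
  imports Defs
begin

text \<open>
  Since \<open>ordp p\<close> is a valuation, \<open>ordp p (Gbar m)\<close> is the sum of \<open>v\<^sub>p(k) - v\<^sub>p(h)\<close> over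
  all pairs \<open>1 \<le> h \<le> k \<le> m\<close>, and \<open>ordp p (Fbar m)\<close> is the same sum over the coprime pairs.
  The summand is invariant under \<open>(h, k) \<mapsto> (d h, d k)\<close>, so sieving by \<open>gcd h k\<close> with the
  Moebius function gives \<open>ordp p (Fbar N) = \<Sum>\<^sub>d \<mu>(d) ordp p (Gbar \<lfloor>N/d\<rfloor>)\<close>.
  Below \<open>p\<^sup>2\<close> every \<open>v\<^sub>p\<close> is 0 or 1, and adding the rows \<open>k = 1, \<dots>, m\<close> one at a time
  gives \<open>ordp p (Gbar (a p + b)) = a (p - 1 - b)\<close>; in particular it vanishes below \<open>p\<close>, so
  for \<open>N = p\<^sup>2 - 1\<close> only \<open>d < p\<close> contribute. Part (3) then follows from
  \<open>\<Sum>\<^sub>k\<^sub>\<le>\<^sub>n \<mu>(k) \<lfloor>n/k\<rfloor> = 1\<close> and \<open>\<lfloor>(p\<^sup>2 - 1)/k\<rfloor> div p = \<lfloor>(p - 1)/k\<rfloor>\<close>.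
\<close>

subsection \<open>The \<open>p\<close>-adic valuation of rationals\<close>

lemma ordp_of_int_div:
  assumes "prime p" "a \<noteq> 0" "b \<noteq> 0"
  shows "ordp p (of_int a / of_int b) = int (multiplicity (int p) a) - int (multiplicity (int p) b)"
proof -
  obtain c e where q: "quotient_of (of_int a / of_int b) = (c, e)" by fastforce
  have e: "e > 0" using quotient_of_denom_pos[OF q] .
  have "(of_int a / of_int b :: rat) = of_int c / of_int e" using quotient_of_div[OF q] .
  hence "(of_int (a * e) :: rat) = of_int (c * b)" using assms e by (simp add: field_simps)
  hence ae: "a * e = c * b" by (simp only: of_int_eq_iff)
  have c: "c \<noteq> 0" using ae assms e by auto
  have "multiplicity (int p) (a * e) = multiplicity (int p) (c * b)" using ae by simp
  hence "multiplicity (int p) a + multiplicity (int p) e = multiplicity (int p) c + multiplicity (int p) b"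
    using assms c e by (simp add: prime_elem_multiplicity_mult_distrib)
  thus ?thesis by (simp add: ordp_def q)
qed

lemma ordp_mult:
  assumes "prime p" "x \<noteq> 0" "y \<noteq> 0"
  shows "ordp p (x * y) = ordp p x + ordp p y"
proof -
  obtain a b where x: "quotient_of x = (a, b)" by fastforce
  obtain c e where y: "quotient_of y = (c, e)" by fastforce
  have b: "b > 0" and e: "e > 0" using quotient_of_denom_pos[OF x] quotient_of_denom_pos[OF y] .
  have xab: "x = of_int a / of_int b" and yce: "y = of_int c / of_int e"
    using quotient_of_div[OF x] quotient_of_div[OF y] .
  have a: "a \<noteq> 0" and c: "c \<noteq> 0" using assms(2,3) xab yce by auto
  have "x * y = of_int (a * c) / of_int (b * e)" by (simp add: xab yce)
  hence "ordp p (x * y) = int (multiplicity (int p) (a * c)) - int (multiplicity (int p) (b * e))"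
    using ordp_of_int_div[of p "a * c" "b * e"] assms(1) a b c e by simp
  thus ?thesis
    using assms(1) a b c e by (simp add: ordp_def x y prime_elem_multiplicity_mult_distrib)
qed

lemma ordp_prod:
  assumes "prime p" "finite A" "\<And>x. x \<in> A \<Longrightarrow> f x \<noteq> 0"
  shows "ordp p (\<Prod>x\<in>A. f x) = (\<Sum>x\<in>A. ordp p (f x))"
  using assms(2,3)
proof (induction A rule: finite_induct)
  case empty
  show ?case by (simp add: ordp_def)
next
  case (insert x A)
  thus ?case by (simp add: ordp_mult[OF assms(1)])
qed

lemma ordp_of_nat_div:
  assumes "prime p" "h > 0" "k > 0"
  shows "ordp p (of_nat k / of_nat h) =
           int (multiplicity (int p) (int k)) - int (multiplicity (int p) (int h))"
  using ordp_of_int_div[of p "int k" "int h"] assms by simp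

subsection \<open>Sums of the Moebius function\<close>

lemma moebius_eq_0_if_square_dvd:
  assumes "q ^ 2 dvd d" "q \<noteq> 1"
  shows "moebius d = 0"
  using not_squarefreeI[of q d] assms by (simp add: moebius_def)

lemma moebius_prime_mult:
  assumes q: "prime q" and "\<not> q dvd e" "e > 0"
  shows "moebius (q * e) = - moebius e"
proof -
  have "coprime q e" using assms by (simp add: prime_imp_coprime)
  hence "squarefree (q * e) \<longleftrightarrow> squarefree e"
    using squarefree_multD(2)[of q e] squarefree_mult_coprime squarefree_prime[OF q] by blast
  moreover have "prime_factors (q * e) = insert q (prime_factors e)"
    using assms by (simp add: prime_factors_product prime_prime_factors)
  moreover have "q \<notin> prime_factors e" using assms(2) by auto
  ultimately show ?thesis using assms by (simp add: moebius_def)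
qed

lemma sum_moebius_divisors:
  assumes "n > 0"
  shows "(\<Sum>d | d dvd n. moebius d) = (if n = 1 then 1 else 0)"
proof (cases "n = 1")
  case True
  thus ?thesis by (simp add: moebius_def)
next
  case False
  then obtain q where q: "prime q" "q dvd n" using prime_factor_nat[of n] by auto
  have q1: "q > 1" using q(1) prime_gt_1_nat by blast
  define E where "E = {e. e dvd n \<and> \<not> q dvd e}"
  have fin: "finite {d. d dvd n}" using assms by simp
  hence finE: "finite E" by (rule rev_finite_subset) (auto simp: E_def)
  have qE: "q * e dvd n" if "e \<in> E" for e
    using that q by (auto simp: E_def prime_imp_coprime intro: divides_mult)
  have squarefree_part: "{d. d dvd n \<and> \<not> q^2 dvd d} = E \<union> (*) q ` E"
  proof (intro set_eqI iffI)
    fix d assume d: "d \<in> {d. d dvd n \<and> \<not> q^2 dvd d}"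
    show "d \<in> E \<union> (*) q ` E"
    proof (cases "q dvd d")
      case True
      then obtain e where "d = q * e" by blast
      thus ?thesis using d by (auto simp: E_def power2_eq_square intro: dvd_trans[of e d n])
    qed (use d in \<open>auto simp: E_def\<close>)
  next
    fix d assume "d \<in> E \<union> (*) q ` E"
    thus "d \<in> {d. d dvd n \<and> \<not> q^2 dvd d}"
      using qE q1 by (auto simp: E_def power2_eq_square intro: dvd_trans[of _ q])
  qed
  have "(\<Sum>d | d dvd n. moebius d) = (\<Sum>d | d dvd n \<and> \<not> q^2 dvd d. moebius d)"
    using fin q1 by (intro sum.mono_neutral_right) (auto intro: moebius_eq_0_if_square_dvd)
  also have "\<dots> = (\<Sum>e\<in>E. moebius e) + (\<Sum>e\<in>E. moebius (q * e))"
    unfolding squarefree_part using finE q1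
    by (subst sum.union_disjoint) (auto simp: E_def sum.reindex inj_on_def)
  also have "\<dots> = 0"
    using q(1) assms by (simp add: sum.distrib[symmetric] E_def moebius_prime_mult dvd_pos_nat)
  finally show ?thesis using False by simp
qed

lemma sum_moebius_dvd_atLeastAtMost:
  assumes "0 < g" "g \<le> N"
  shows "(\<Sum>d = 1..N. if d dvd g then moebius d else 0) = (if g = 1 then 1 else 0)"
proof -
  have "(\<Sum>d = 1..N. if d dvd g then moebius d else 0) = (\<Sum>d \<in> {1..N} \<inter> {d. d dvd g}. moebius d)"
    by (simp add: sum.inter_restrict)
  also have "{1..N} \<inter> {d. d dvd g} = {d. d dvd g}"
    using assms dvd_pos_nat[OF assms(1)] dvd_imp_le[OF _ assms(1)]
    by (auto simp: Suc_le_eq) (meson le_trans)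
  finally show ?thesis using sum_moebius_divisors[OF assms(1)] by simp
qed

lemma sum_moebius_times_div:
  assumes "n \<ge> 1"
  shows "(\<Sum>k = 1..n. moebius k * int (n div k)) = 1"
proof -
  have multiples: "n div k = card {j \<in> {1..n}. k dvd j}" if "k \<ge> 1" for k
  proof -
    have "{j \<in> {1..n}. k dvd j} = (\<lambda>i. k * i) ` {1..n div k}"
      using that by (auto simp: image_iff less_eq_div_iff_mult_less_eq mult.commute elim!: dvdE)
    moreover have "inj_on (\<lambda>i. k * i) {1..n div k}" using that by (auto simp: inj_on_def)
    ultimately show ?thesis by (simp add: card_image)
  qed
  have "(\<Sum>k = 1..n. moebius k * int (n div k)) =
        (\<Sum>k = 1..n. \<Sum>j = 1..n. if k dvd j then moebius k else 0)"
    by (intro sum.cong refl) (simp add: multiples sum.If_cases Int_def)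
  also have "\<dots> = (\<Sum>j = 1..n. \<Sum>k = 1..n. if k dvd j then moebius k else 0)"
    by (rule sum.swap)
  also have "\<dots> = (\<Sum>j = 1..n. if j = 1 then 1 else 0)"
    by (rule sum.cong[OF refl], rule sum_moebius_dvd_atLeastAtMost) auto
  finally show ?thesis using assms by simp
qed

subsection \<open>Fractions of order \<open>m\<close>\<close>

definition fraction_pairs :: "nat \<Rightarrow> (nat \<times> nat) set" where
  "fraction_pairs m = {(h, k). 1 \<le> h \<and> h \<le> k \<and> k \<le> m}"

lemma finite_fraction_pairs: "finite (fraction_pairs m)"
  by (rule finite_subset[of _ "{1..m} \<times> {1..m}"]) (auto simp: fraction_pairs_def)

lemma fraction_pairs_Suc:
  "fraction_pairs (Suc m) = fraction_pairs m \<union> (\<lambda>h. (h, Suc m)) ` {1..Suc m}"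
  by (auto simp: fraction_pairs_def)

lemma fraction_pairs_common_divisor:
  assumes "d > 0"
  shows "{(h, k) \<in> fraction_pairs N. d dvd h \<and> d dvd k} =
         (\<lambda>(h, k). (d * h, d * k)) ` fraction_pairs (N div d)"
  using assms
  by (auto simp: fraction_pairs_def image_iff less_eq_div_iff_mult_less_eq mult.commute
           elim!: dvdE)

lemma ordp_inverse_prod_fractions:
  assumes "prime p" "A \<subseteq> fraction_pairs m"
  shows "ordp p (inverse (\<Prod>(h, k) \<in> A. of_nat h / of_nat k)) =
         (\<Sum>(h, k) \<in> A. ordp p (of_nat k / of_nat h))"
proof -
  have "finite A" using assms(2) finite_fraction_pairs by (rule finite_subset)
  have "inverse (\<Prod>(h, k) \<in> A. of_nat h / of_nat k :: rat) = (\<Prod>(h, k) \<in> A. of_nat k / of_nat h)"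
    by (simp add: prod_inversef[symmetric] o_def case_prod_unfold)
  also have "ordp p \<dots> = (\<Sum>x \<in> A. ordp p ((\<lambda>(h, k). of_nat k / of_nat h) x))"
    using assms \<open>finite A\<close> by (intro ordp_prod) (auto simp: fraction_pairs_def)
  finally show ?thesis by (simp add: case_prod_unfold)
qed

lemma ordp_Gbar:
  "prime p \<Longrightarrow> ordp p (Gbar m) = (\<Sum>(h, k) \<in> fraction_pairs m. ordp p (of_nat k / of_nat h))"
  unfolding Gbar_def fraction_pairs_def[symmetric] by (rule ordp_inverse_prod_fractions[of p _ m]) simp_all

lemma ordp_Fbar:
  assumes "prime p"
  shows "ordp p (Fbar m) =
           (\<Sum>(h, k) \<in> {(h, k) \<in> fraction_pairs m. coprime h k}. ordp p (of_nat k / of_nat h))"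
proof -
  have "{(h, k). 1 \<le> h \<and> h \<le> k \<and> k \<le> m \<and> coprime h k} = {(h, k) \<in> fraction_pairs m. coprime h k}"
    by (auto simp: fraction_pairs_def)
  thus ?thesis
    unfolding Fbar_def
    by (simp only:) (rule ordp_inverse_prod_fractions[OF assms, where m = m], auto)
qed

lemma sum_fraction_pairs_common_divisor:
  fixes g :: "nat \<Rightarrow> nat \<Rightarrow> int"
  assumes "d > 0" and scale_invariant: "\<And>h k. g (d * h) (d * k) = g h k"
  shows "(\<Sum>(h, k) \<in> {(h, k) \<in> fraction_pairs N. d dvd h \<and> d dvd k}. g h k) =
         (\<Sum>(h, k) \<in> fraction_pairs (N div d). g h k)"
proof -
  have "inj_on (\<lambda>(h, k). (d * h, d * k)) (fraction_pairs (N div d))"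
    using assms(1) by (auto simp: inj_on_def)
  thus ?thesis
    unfolding fraction_pairs_common_divisor[OF assms(1)]
    by (simp add: sum.reindex o_def case_prod_unfold scale_invariant)
qed

lemma sum_coprime_fraction_pairs_moebius:
  fixes g :: "nat \<Rightarrow> nat \<Rightarrow> int"
  assumes scale_invariant: "\<And>d h k. d > 0 \<Longrightarrow> g (d * h) (d * k) = g h k"
  shows "(\<Sum>(h, k) \<in> {(h, k) \<in> fraction_pairs N. coprime h k}. g h k) =
         (\<Sum>d = 1..N. moebius d * (\<Sum>(h, k) \<in> fraction_pairs (N div d). g h k))"
proof -
  have gcd_sieve: "(if coprime h k then g h k else 0) =
      (\<Sum>d = 1..N. if d dvd h \<and> d dvd k then moebius d * g h k else 0)"
    if "(h, k) \<in> fraction_pairs N" for h k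
  proof -
    have "0 < gcd h k" "gcd h k \<le> N"
      using that by (auto simp: fraction_pairs_def intro: order.trans[OF gcd_le2_nat])
    from sum_moebius_dvd_atLeastAtMost[OF this]
    have "(if coprime h k then g h k else 0) = (\<Sum>d = 1..N. if d dvd gcd h k then moebius d else 0) * g h k"
      by (simp add: coprime_iff_gcd_eq_1)
    also have "\<dots> = (\<Sum>d = 1..N. if d dvd h \<and> d dvd k then moebius d * g h k else 0)"
      by (auto simp: sum_distrib_right intro!: sum.cong)
    finally show ?thesis .
  qed
  have "(\<Sum>(h, k) \<in> {(h, k) \<in> fraction_pairs N. coprime h k}. g h k) =
        (\<Sum>(h, k) \<in> fraction_pairs N. if coprime h k then g h k else 0)"
    by (simp add: sum.inter_filter[OF finite_fraction_pairs] case_prod_unfold)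
  also have "\<dots> = (\<Sum>(h, k) \<in> fraction_pairs N. \<Sum>d = 1..N.
                      if d dvd h \<and> d dvd k then moebius d * g h k else 0)"
    by (intro sum.cong refl) (auto simp: gcd_sieve)
  also have "\<dots> = (\<Sum>d = 1..N. \<Sum>(h, k) \<in> fraction_pairs N.
                      if d dvd h \<and> d dvd k then moebius d * g h k else 0)"
    by (subst sum.swap) (simp add: case_prod_unfold)
  also have "\<dots> = (\<Sum>d = 1..N. moebius d *
                   (\<Sum>(h, k) \<in> {(h, k) \<in> fraction_pairs N. d dvd h \<and> d dvd k}. g h k))"
    by (auto simp: sum.inter_filter[OF finite_fraction_pairs] case_prod_unfold sum_distrib_left
             intro!: sum.cong)
  also have "\<dots> = (\<Sum>d = 1..N. moebius d * (\<Sum>(h, k) \<in> fraction_pairs (N div d). g h k))"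
    by (intro sum.cong refl) (simp add: sum_fraction_pairs_common_divisor scale_invariant)
  finally show ?thesis .
qed

lemma ordp_Fbar_moebius:
  assumes "prime p"
  shows "ordp p (Fbar N) = (\<Sum>d = 1..N. moebius d * ordp p (Gbar (N div d)))"
  unfolding ordp_Fbar[OF assms] ordp_Gbar[OF assms]
  by (rule sum_coprime_fraction_pairs_moebius) simp

subsection \<open>Valuations below \<open>p\<^sup>2\<close>\<close>

lemma multiplicity_less_square:
  assumes "0 < n" "n < p^2"
  shows "multiplicity (int p) (int n) = (if p dvd n then 1 else 0)"
proof (cases "p dvd n")
  case True
  have "\<not> p^2 dvd n" using assms by (auto dest: dvd_imp_le)
  hence "\<not> int p ^ Suc 1 dvd int n" by (simp add: power2_eq_square flip: of_nat_mult)
  moreover have "int p ^ 1 dvd int n" using True by simp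
  ultimately show ?thesis using True by (simp add: multiplicity_eqI)
next
  case False
  thus ?thesis by (simp add: not_dvd_imp_multiplicity_0)
qed

lemma sum_multiplicity_less_square:
  "n < p^2 \<Longrightarrow> (\<Sum>h = 1..n. multiplicity (int p) (int h)) = n div p"
proof (induction n)
  case (Suc n)
  have "(\<Sum>h = 1..Suc n. multiplicity (int p) (int h)) = n div p + (if p dvd Suc n then 1 else 0)"
    using Suc multiplicity_less_square[of "Suc n"] by simp
  also have "\<dots> = Suc n div p" by (simp add: div_Suc dvd_eq_mod_eq_0)
  finally show ?case .
qed simp

lemma ordp_Gbar_Suc:
  assumes "prime p"
  shows "ordp p (Gbar (Suc m)) =
           ordp p (Gbar m) + (\<Sum>h = 1..Suc m. ordp p (of_nat (Suc m) / of_nat h))"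
proof -
  have "fraction_pairs m \<inter> (\<lambda>h. (h, Suc m)) ` {1..Suc m} = {}"
    by (auto simp: fraction_pairs_def)
  moreover have "inj_on (\<lambda>h. (h, Suc m)) {1..Suc m}" by (auto simp: inj_on_def)
  ultimately show ?thesis
    unfolding ordp_Gbar[OF assms] fraction_pairs_Suc
    by (simp add: sum.union_disjoint finite_fraction_pairs sum.reindex)
qed

lemma ordp_Gbar_less_square:
  assumes "prime p" "m < p^2"
  shows "ordp p (Gbar m) = int (m div p) * (int p - 1 - int (m mod p))"
  using assms(2)
proof (induction m)
  case 0
  have "fraction_pairs 0 = {}" by (auto simp: fraction_pairs_def)
  thus ?case by (simp add: ordp_Gbar[OF assms(1)])
next
  case (Suc m)
  have row: "(\<Sum>h = 1..Suc m. ordp p (of_nat (Suc m) / of_nat h)) =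
               int (Suc m) * (if p dvd Suc m then 1 else 0) - int (Suc m div p)"
  proof -
    have "(\<Sum>h = 1..Suc m. ordp p (of_nat (Suc m) / of_nat h)) =
          (\<Sum>h = 1..Suc m. int (multiplicity (int p) (int (Suc m))) - int (multiplicity (int p) (int h)))"
      using assms(1) by (intro sum.cong refl) (simp add: ordp_of_nat_div del: of_nat_Suc)
    also have "\<dots> = int (Suc m) * int (multiplicity (int p) (int (Suc m))) -
                      int (\<Sum>h = 1..Suc m. multiplicity (int p) (int h))"
      by (simp only: sum_subtractf sum_constant of_nat_sum card_atLeastAtMost) simp
    finally show ?thesis
      using multiplicity_less_square[OF _ Suc.prems]
      by (simp only: sum_multiplicity_less_square[OF Suc.prems]) simp
  qed
  define a where "a = m div p"
  define b where "b = m mod p"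
  have m: "m = a * p + b" by (simp add: a_def b_def)
  have step: "ordp p (Gbar (Suc m)) = int a * (int p - 1 - int b) +
                int (Suc m) * (if p dvd Suc m then 1 else 0) - int (Suc m div p)"
    unfolding ordp_Gbar_Suc[OF assms(1)] row using Suc by (simp add: a_def b_def)
  show ?case
  proof (cases "Suc b = p")
    case True
    hence "Suc m = (a + 1) * p" using m by simp
    have "Suc m div p = a + 1" "Suc m mod p = 0" "p dvd Suc m"
      using True by (simp_all add: a_def b_def div_Suc mod_Suc dvd_eq_mod_eq_0)
    moreover have "int (Suc m) = (int a + 1) * int p" "int b = int p - 1"
      using \<open>Suc m = (a + 1) * p\<close> True by (simp_all add: algebra_simps flip: of_nat_mult)
    ultimately show ?thesis unfolding step by (simp add: algebra_simps)
  next
    case False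
    hence "Suc m div p = a" "Suc m mod p = Suc b" "\<not> p dvd Suc m"
      by (simp_all add: a_def b_def div_Suc mod_Suc dvd_eq_mod_eq_0)
    thus ?thesis unfolding step by (simp add: algebra_simps)
  qed
qed

lemma ordp_Gbar_less:
  assumes "prime p" "m < p"
  shows "ordp p (Gbar m) = 0"
proof -
  have "m < p^2" using assms(2) by (simp add: power2_eq_square less_le_trans[OF _ le_square])
  thus ?thesis using assms by (simp add: ordp_Gbar_less_square)
qed

lemma ordp_Fbar_less_square:
  assumes "prime p" "p - 1 \<le> N" "N < p^2"
  shows "ordp p (Fbar N) = (\<Sum>k = 1..p - 1. moebius k * ordp p (Gbar (N div k)))"
proof -
  have p: "0 < p" using assms(1) prime_gt_0_nat by blast
  have "{1..N} = {1..p - 1} \<union> {p..N}" using p assms(2) by auto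
  moreover have "ordp p (Gbar (N div k)) = 0" if "k \<in> {p..N}" for k
  proof -
    have "N div k \<le> N div p" using that p by (simp add: div_le_mono2)
    also have "N div p < p" using assms(3) p by (simp add: div_less_iff_less_mult power2_eq_square)
    finally show ?thesis by (rule ordp_Gbar_less[OF assms(1)])
  qed
  ultimately show ?thesis
    unfolding ordp_Fbar_moebius[OF assms(1)] by (simp add: sum.union_disjoint)
qed

lemma square_minus_one_div_div: "(p^2 - 1) div k div p = (p - 1) div k" for p k :: nat
proof -
  have "(p^2 - 1) div p = p - 1"
    by (cases p) (auto simp: power2_eq_square intro!: div_nat_eqI)
  thus ?thesis by (metis div_mult2_eq mult.commute)
qed

lemma square_minus_one_div_digits:
  fixes p k :: nat
  assumes "prime p"
  defines "m \<equiv> (p^2 - 1) div k" and "a \<equiv> (p - 1) div k"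
  shows "m = a * p + (m - p * a) \<and> a \<le> p - 1
         \<and> int m - int p * int a \<ge> 0 \<and> int m - int p * int a \<le> int p - 1
         \<and> ordp p (Gbar m) = int a * (int p - 1 - (int m - int p * int a))"
proof -
  have p: "0 < p" using assms(1) prime_gt_0_nat by blast
  have a: "m div p = a" unfolding m_def a_def by (rule square_minus_one_div_div)
  hence m: "m = a * p + m mod p" by (metis div_mult_mod_eq)
  hence digit: "int m - int p * int a = int (m mod p)" by (metis add_diff_cancel_left' mult.commute of_nat_add of_nat_mult)
  have "m < p^2" unfolding m_def using p by (simp add: le_less_trans[OF div_le_dividend])
  hence "ordp p (Gbar m) = int a * (int p - 1 - int (m mod p))"
    using ordp_Gbar_less_square[OF assms(1)] a by simp
  moreover have "int (m mod p) \<le> int p - 1" using p by simp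
  moreover have "a \<le> p - 1" unfolding a_def by (rule div_le_dividend)
  ultimately show ?thesis using m digit by (metis add_diff_cancel_left' mult.commute of_nat_0_le_iff)
qed

lemma sum_moebius_mult_div_affine:
  fixes G b :: "nat \<Rightarrow> int"
  assumes "n \<ge> 1" "\<forall>k \<in> {1..n}. G k = int (n div k) * (c - b k)"
  shows "(\<Sum>k = 1..n. moebius k * G k) = c - (\<Sum>k = 1..n. moebius k * int (n div k) * b k)"
proof -
  have "(\<Sum>k = 1..n. moebius k * G k) =
        (\<Sum>k = 1..n. c * (moebius k * int (n div k)) - moebius k * int (n div k) * b k)"
  proof (intro sum.cong refl)
    fix k assume "k \<in> {1..n}"
    hence G: "G k = int (n div k) * (c - b k)" using assms(2) by blast
    show "moebius k * G k = c * (moebius k * int (n div k)) - moebius k * int (n div k) * b k"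
      unfolding G by (simp add: algebra_simps)
  qed
  also have "\<dots> = c * (\<Sum>k = 1..n. moebius k * int (n div k)) - (\<Sum>k = 1..n. moebius k * int (n div k) * b k)"
    by (simp add: sum_subtractf sum_distrib_left)
  finally show ?thesis using sum_moebius_times_div[OF assms(1)] by simp
qed

theorem theorem4p8:
  fixes p :: nat
  assumes "prime p" and "p \<ge> 3"
  shows "(ordp p (Fbar (p^2 - 1)) =
            (\<Sum>k = 1..p - 1. moebius k * ordp p (Gbar ((p^2 - 1) div k))))
       \<and> (\<forall>k \<in> {1..p - 1}.
            (p^2 - 1) div k = ((p - 1) div k) * p + ((p^2 - 1) div k - p * ((p - 1) div k))
          \<and> (p - 1) div k \<le> p - 1
          \<and> int ((p^2 - 1) div k) - int p * int ((p - 1) div k) \<ge> 0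
          \<and> int ((p^2 - 1) div k) - int p * int ((p - 1) div k) \<le> int p - 1
          \<and> ordp p (Gbar ((p^2 - 1) div k)) =
              int ((p - 1) div k) *
              (int p - 1 - (int ((p^2 - 1) div k) - int p * int ((p - 1) div k))))
       \<and> (ordp p (Fbar (p^2 - 1)) =
            int p - 1 - (\<Sum>k = 1..p - 1. moebius k * int ((p - 1) div k) *
               (int ((p^2 - 1) div k) - int p * int ((p - 1) div k))))"
proof -
  have p: "1 < p" using assms(2) by simp
  have part1: "ordp p (Fbar (p^2 - 1)) = (\<Sum>k = 1..p - 1. moebius k * ordp p (Gbar ((p^2 - 1) div k)))"
    using p by (intro ordp_Fbar_less_square[OF assms(1)]) (simp_all add: diff_le_mono power2_eq_square)
  moreover have part2: "\<forall>k \<in> {1..p - 1}.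
            (p^2 - 1) div k = ((p - 1) div k) * p + ((p^2 - 1) div k - p * ((p - 1) div k))
          \<and> (p - 1) div k \<le> p - 1
          \<and> int ((p^2 - 1) div k) - int p * int ((p - 1) div k) \<ge> 0
          \<and> int ((p^2 - 1) div k) - int p * int ((p - 1) div k) \<le> int p - 1
          \<and> ordp p (Gbar ((p^2 - 1) div k)) =
              int ((p - 1) div k) *
              (int p - 1 - (int ((p^2 - 1) div k) - int p * int ((p - 1) div k)))"
    using square_minus_one_div_digits[OF assms(1)] by blast
  moreover have "(\<Sum>k = 1..p - 1. moebius k * ordp p (Gbar ((p^2 - 1) div k))) =
            int p - 1 - (\<Sum>k = 1..p - 1. moebius k * int ((p - 1) div k) *
               (int ((p^2 - 1) div k) - int p * int ((p - 1) div k)))"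
    using p part2 by (intro sum_moebius_mult_div_affine) auto
  ultimately show ?thesis by simp
qed

end
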